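(* Let $A=(A,\wedge,\vee,\cdot,\to,1)$ be an algebra of type $(2,2,2,2,0)$ satisfying conditions (1)–(8) below. Then $A$ satisfies condition (9) if and only if for all $a,b,c,d\in A$, $(a\to b)\cdot(c\to d)\le (a\cdot c)\to(b\cdot d)$.
   Context: Conditions, for all $a,b,c\in A$: (1) $(A,\wedge,\vee)$ is a distributive lattice (with order $\le$); (2) $1$ is its largest element; (3) $(A,\cdot,1)$ is a commutative monoid; (4) $(a\to b)\wedge(a\to c)=a\to(b\wedge c)$; (5) $(a\to c)\wedge(b\to c)=(a\vee b)\to c$; (6) $a\to a=1$; (7) $(a\vee b)\cdot c=(a\cdot c)\vee(b\cdot c)$; (8) $(a\to b)\cdot(b\to c)\le a\to c$; (9) $a\to b\le (a\cdot c)\to(b\cdot c)$. *)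

theory Defs
  imports Main
begin

definition lat_le :: "('a \<Rightarrow> 'a \<Rightarrow> 'a) \<Rightarrow> 'a \<Rightarrow> 'a \<Rightarrow> bool" where
  "lat_le meet a b \<longleftrightarrow> meet a b = a"

definition is_distrib_lattice :: "('a \<Rightarrow> 'a \<Rightarrow> 'a) \<Rightarrow> ('a \<Rightarrow> 'a \<Rightarrow> 'a) \<Rightarrow> bool" where
  "is_distrib_lattice meet join \<longleftrightarrow>
     (\<forall>a b c. meet (meet a b) c = meet a (meet b c)) \<and>
     (\<forall>a b c. join (join a b) c = join a (join b c)) \<and>
     (\<forall>a b. meet a b = meet b a) \<and>
     (\<forall>a b. join a b = join b a) \<and>
     (\<forall>a b. meet a (join a b) = a) \<and>
     (\<forall>a b. join a (meet a b) = a) \<and>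
     (\<forall>a b c. meet a (join b c) = join (meet a b) (meet a c))"

definition conds_1_to_8 ::
  "('a \<Rightarrow> 'a \<Rightarrow> 'a) \<Rightarrow> ('a \<Rightarrow> 'a \<Rightarrow> 'a) \<Rightarrow> ('a \<Rightarrow> 'a \<Rightarrow> 'a) \<Rightarrow> ('a \<Rightarrow> 'a \<Rightarrow> 'a) \<Rightarrow> 'a \<Rightarrow> bool" where
  "conds_1_to_8 meet join mult imp one \<longleftrightarrow>
     is_distrib_lattice meet join \<and>
     (\<forall>a. lat_le meet a one) \<and>
     (\<forall>a b c. mult (mult a b) c = mult a (mult b c)) \<and>
     (\<forall>a b. mult a b = mult b a) \<and>
     (\<forall>a. mult a one = a) \<and>
     (\<forall>a b c. meet (imp a b) (imp a c) = imp a (meet b c)) \<and>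
     (\<forall>a b c. meet (imp a c) (imp b c) = imp (join a b) c) \<and>
     (\<forall>a. imp a a = one) \<and>
     (\<forall>a b c. mult (join a b) c = join (mult a c) (mult b c)) \<and>
     (\<forall>a b c. lat_le meet (mult (imp a b) (imp b c)) (imp a c))"

definition cond_9 ::
  "('a \<Rightarrow> 'a \<Rightarrow> 'a) \<Rightarrow> ('a \<Rightarrow> 'a \<Rightarrow> 'a) \<Rightarrow> ('a \<Rightarrow> 'a \<Rightarrow> 'a) \<Rightarrow> bool" where
  "cond_9 meet mult imp \<longleftrightarrow>
     (\<forall>a b c. lat_le meet (imp a b) (imp (mult a c) (mult b c)))"

end

theory Submission
  imports Defs
begin

text \<open>Condition (9) multiplies an implication by a constant on both sides. Applying it twice,
  to the right on a \<rightarrow> b and to the left on c \<rightarrow> d, and composing the two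
  results with the transitivity law (8) gives the four-variable inequality; conversely, taking
  c = d in the four-variable inequality turns c \<rightarrow> c into the unit 1 and recovers (9).\<close>

lemma conds_1_to_8D:
  assumes "conds_1_to_8 meet join mult imp one"
  shows conds_lattice: "is_distrib_lattice meet join"
    and conds_mult_commute: "mult a b = mult b a"
    and conds_mult_one: "mult a one = a"
    and conds_imp_refl: "imp a a = one"
    and conds_mult_join_distrib: "mult (join a b) c = join (mult a c) (mult b c)"
    and conds_imp_trans: "lat_le meet (mult (imp a b) (imp b c)) (imp a c)"
  using assms unfolding conds_1_to_8_def by blast+

lemma is_distrib_latticeD:
  assumes "is_distrib_lattice meet join"
  shows meet_assoc: "meet (meet a b) c = meet a (meet b c)"
    and meet_commute: "meet a b = meet b a"
    and join_commute: "join a b = join b a"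
    and meet_join_absorb: "meet a (join a b) = a"
    and join_meet_absorb: "join a (meet a b) = a"
  using assms unfolding is_distrib_lattice_def by blast+

lemma lat_le_trans:
  assumes "is_distrib_lattice meet join" and "lat_le meet x y" and "lat_le meet y z"
  shows "lat_le meet x z"
proof -
  have xy: "meet x y = x" and yz: "meet y z = y"
    using assms(2,3) unfolding lat_le_def by simp_all
  have "meet x z = meet (meet x y) z"
    by (simp only: xy)
  also have "\<dots> = meet x (meet y z)"
    by (rule meet_assoc[OF assms(1)])
  also have "\<dots> = x"
    by (simp only: yz xy)
  finally show ?thesis
    unfolding lat_le_def .
qed

lemma lat_le_imp_join_eq:
  assumes "is_distrib_lattice meet join" and "lat_le meet x y"
  shows "join x y = y"
proof -
  have "join x y = join y (meet y x)"
    using assms(2) unfolding lat_le_def meet_commute[OF assms(1), of y x]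
    by (simp only: join_commute[OF assms(1), of x y])
  also have "\<dots> = y"
    by (rule join_meet_absorb[OF assms(1)])
  finally show ?thesis .
qed

lemma mult_mono_left:
  assumes "is_distrib_lattice meet join"
    and "\<And>a b c. mult (join a b) c = join (mult a c) (mult b c)"
    and "lat_le meet x y"
  shows "lat_le meet (mult x z) (mult y z)"
proof -
  have "join (mult x z) (mult y z) = mult y z"
    unfolding assms(2)[symmetric] lat_le_imp_join_eq[OF assms(1,3)] ..
  with meet_join_absorb[OF assms(1), of "mult x z" "mult y z"] show ?thesis
    unfolding lat_le_def by (simp only:)
qed

lemma mult_mono:
  assumes conds: "conds_1_to_8 meet join mult imp one"
    and "lat_le meet x x'" and "lat_le meet y y'"
  shows "lat_le meet (mult x y) (mult x' y')"
proof -
  note lattice = conds_lattice[OF conds]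
  note mono_left = mult_mono_left[where mult = mult, OF lattice conds_mult_join_distrib[OF conds]]
  have "lat_le meet (mult y x') (mult y' x')"
    using mono_left[OF assms(3)] .
  then have "lat_le meet (mult x' y) (mult x' y')"
    by (simp only: conds_mult_commute[OF conds, of x' y] conds_mult_commute[OF conds, of x' y'])
  with mono_left[OF assms(2)] show ?thesis
    by (rule lat_le_trans[OF lattice])
qed

lemma cond_9_imp_mult_imp_le:
  assumes conds: "conds_1_to_8 meet join mult imp one" and "cond_9 meet mult imp"
  shows "lat_le meet (mult (imp a b) (imp c d)) (imp (mult a c) (mult b d))"
proof -
  have "lat_le meet (imp a b) (imp (mult a c) (mult b c))"
    using assms(2) unfolding cond_9_def by blast
  moreover have "lat_le meet (imp c d) (imp (mult c b) (mult d b))"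
    using assms(2) unfolding cond_9_def by blast
  then have "lat_le meet (imp c d) (imp (mult b c) (mult b d))"
    by (simp only: conds_mult_commute[OF conds, of c b] conds_mult_commute[OF conds, of d b])
  ultimately have "lat_le meet (mult (imp a b) (imp c d))
      (mult (imp (mult a c) (mult b c)) (imp (mult b c) (mult b d)))"
    by (rule mult_mono[OF conds])
  then show ?thesis
    using conds_imp_trans[OF conds] by (rule lat_le_trans[OF conds_lattice[OF conds]])
qed

lemma mult_imp_le_imp_cond_9:
  assumes conds: "conds_1_to_8 meet join mult imp one"
    and "\<forall>a b c d. lat_le meet (mult (imp a b) (imp c d)) (imp (mult a c) (mult b d))"
  shows "cond_9 meet mult imp"
  unfolding cond_9_def
proof (intro allI)
  fix a b c
  have "lat_le meet (mult (imp a b) (imp c c)) (imp (mult a c) (mult b c))"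
    using assms(2) by blast
  then show "lat_le meet (imp a b) (imp (mult a c) (mult b c))"
    unfolding conds_imp_refl[OF conds] conds_mult_one[OF conds] .
qed

theorem lemma2p7:
  fixes meet join mult imp :: "'a \<Rightarrow> 'a \<Rightarrow> 'a" and one :: 'a
  assumes "conds_1_to_8 meet join mult imp one"
  shows "cond_9 meet mult imp \<longleftrightarrow>
    (\<forall>a b c d. lat_le meet (mult (imp a b) (imp c d)) (imp (mult a c) (mult b d)))"
  using cond_9_imp_mult_imp_le[OF assms] mult_imp_le_imp_cond_9[OF assms] by blast

end
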